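(* Let $J\ge p\ge 1$ be integers, let $\sigma_\varepsilon^2>0$, let $\mathbf{\Sigma}_\gamma$ be a nonnegative definite symmetric $J\times J$ matrix, let $I>0$, and let $\mathbf{A}_{\bm\beta}$ be a real $J\times p$ matrix (the Jacobian of the mean response at a fixed nominal parameter $\bm\beta$). For an approximate design $\xi=(I_1,\dots,I_J)$ (real $I_j\ge 0$ with $\sum_j I_j=I$) put $\mathbf{M}_0(\xi)=\mathrm{diag}(I_1,\dots,I_J)$, $\mathbf{M}_0(\xi)^{1/2}=\mathrm{diag}(\sqrt{I_1},\dots,\sqrt{I_J})$ and $$\mathbf{M}_{\bm\beta}(\xi)=\mathbf{A}_{\bm\beta}^{\mathrm T}\mathbf{M}_0(\xi)^{1/2}\big(\sigma_\varepsilon^2\mathbf{I}_J+\mathbf{M}_0(\xi)^{1/2}\mathbf{\Sigma}_\gamma\mathbf{M}_0(\xi)^{1/2}\big)^{-1}\mathbf{M}_0(\xi)^{1/2}\mathbf{A}_{\bm\beta}.$$ Let $\xi^*=(I_1^*,\dots,I_J^* )$ be a design under which $\bm\beta$ is estimable. For a design $\xi$ under which $\bm\beta$ is estimable, let $\psi_j(\xi)$ denote the $j$th diagonal entry of the $J\times J$ matrix $$\big(\sigma_\varepsilon^2\mathbf{I}_J+\mathbf{\Sigma}_\gamma\mathbf{M}_0(\xi)\big)^{-1}\mathbf{A}_{\bm\beta}\,\mathbf{M}_{\bm\beta}(\xi)^{-1}\mathbf{A}_{\bm\beta}^{\mathrm T}\big(\sigma_\varepsilon^2\mathbf{I}_J+\mathbf{M}_0(\xi)\mathbf{\Sigma}_\gamma\big)^{-1}.$$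 Then $\xi^*$ is locally $D$-optimal if and only if $$\psi_j(\xi^* )\le \frac{1}{I}\sum_{\ell=1}^J I_\ell^*\,\psi_\ell(\xi^* )\quad\text{for all } j=1,\dots,J.$$ Moreover, for the optimal design $\xi^*$, equality holds in this inequality for every $j$ with $I_j^*>0$.
   Context: Setting: $N$ subjects are tested at $J$ fixed time points $t_j=j-1$; the mean response at time $t_j$ is $\mu_j(\bm\beta)$ with parameter $\bm\beta\in\mathbb{R}^p$, and $\mathbf{A}_{\bm\beta}=(\partial\mu_j(\bm\beta)/\partial\beta_k)_{j,k}$ is its $J\times p$ Jacobian; random subject effects at the $J$ time points have covariance $\mathbf{\Sigma}_\gamma$ and measurement errors have variance $\sigma_\varepsilon^2$. A design $\xi=(I_1,\dots,I_J)$ specifies how many items $I_j$ are administered at time $t_j$, with total $I$; for approximate designs the $I_j$ are nonnegative reals. $\mathbf{M}_{\bm\beta}(\xi)$ above is the standardized (per subject) Fisher information. The parameter $\bm\beta$ is estimable under $\xi$ if $\mathbf{A}_{\bm\beta}$ has full column rank $p$ and its columns lie in the column space of $\mathbf{M}_0(\xi)$. A design $\xi^*$ is locally $D$-optimal (at the given $\bm\beta$) if $\log\det\mathbf{M}_{\bm\beta}(\xi^* )\ge\log\det\mathbf{M}_{\bm\beta}(\xi)$ for all approximate designs $\xi$ with total $I$ under which $\bm\beta$ is estimable. *)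

theory Defs
  imports "HOL-Analysis.Analysis"
begin

definition diag_mat :: "real^'j \<Rightarrow> real^'j^'j" where
  "diag_mat v = (\<chi> i k. if i = k then v $ i else 0)"

definition is_design :: "real \<Rightarrow> real^'j \<Rightarrow> bool" where
  "is_design Itot xi \<longleftrightarrow> (\<forall>j. 0 \<le> xi $ j) \<and> (\<Sum>j\<in>UNIV. xi $ j) = Itot"

definition M0 :: "real^'j \<Rightarrow> real^'j^'j" where
  "M0 xi = diag_mat xi"

definition M0_sqrt :: "real^'j \<Rightarrow> real^'j^'j" where
  "M0_sqrt xi = diag_mat (\<chi> j. sqrt (xi $ j))"

definition Mbeta :: "real \<Rightarrow> real^'j^'j \<Rightarrow> real^'p^'j \<Rightarrow> real^'j \<Rightarrow> real^'p^'p" where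
  "Mbeta s2 Sg A xi =
     transpose A ** M0_sqrt xi **
     matrix_inv (s2 *\<^sub>R mat 1 + M0_sqrt xi ** Sg ** M0_sqrt xi) **
     M0_sqrt xi ** A"

definition estimable :: "real^'p^'j \<Rightarrow> real^'j \<Rightarrow> bool" where
  "estimable A xi \<longleftrightarrow> rank A = CARD('p) \<and> columns A \<subseteq> span (columns (M0 xi))"

definition D_optimal ::
  "real \<Rightarrow> real^'j^'j \<Rightarrow> real^'p^'j \<Rightarrow> real \<Rightarrow> real^'j \<Rightarrow> bool" where
  "D_optimal s2 Sg A Itot xs \<longleftrightarrow>
     is_design Itot xs \<and> estimable A xs \<and>
     (\<forall>xi. is_design Itot xi \<and> estimable A xi \<longrightarrow>
        ln (det (Mbeta s2 Sg A xi)) \<le> ln (det (Mbeta s2 Sg A xs)))"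

definition psi :: "real \<Rightarrow> real^'j^'j \<Rightarrow> real^'p^'j \<Rightarrow> real^'j \<Rightarrow> 'j \<Rightarrow> real" where
  "psi s2 Sg A xi j =
     (matrix_inv (s2 *\<^sub>R mat 1 + Sg ** M0 xi) ** A **
      matrix_inv (Mbeta s2 Sg A xi) ** transpose A **
      matrix_inv (s2 *\<^sub>R mat 1 + M0 xi ** Sg)) $ j $ j"

end

theory Submission
  imports Defs
begin

text \<open>Write \<open>M\<^sub>\<beta>(\<xi>) = A\<^sup>T N(\<xi>) A\<close> with the weight matrix
  \<open>N(\<xi>) = (\<sigma>\<^sup>2 I + M\<^sub>0(\<xi>) \<Sigma>)\<^sup>-\<^sup>1 M\<^sub>0(\<xi>)\<close>, which is matrix-concave in the design. Since \<open>ln det\<close> is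
  concave on positive definite matrices and its tangent \<open>X \<mapsto> trace (M\<^sup>-\<^sup>1 X)\<close> is monotone,
  \<open>\<xi> \<mapsto> ln det M\<^sub>\<beta>(\<xi>)\<close> is concave on the designs under which \<open>\<beta>\<close> is estimable, with directional
  derivative \<open>\<sigma>\<^sup>2 \<Sum>\<^sub>j (\<xi>\<^sub>j - \<xi>\<^sup>*\<^sub>j) \<psi>\<^sub>j(\<xi>\<^sup>*)\<close> at \<open>\<xi>\<^sup>*\<close> towards \<open>\<xi>\<close>. Hence \<open>\<xi>\<^sup>*\<close> is optimal iff all these
  derivatives are nonpositive: sufficiency is concavity, necessity follows by approaching \<open>\<xi>\<^sup>*\<close>
  along segments (which keep \<open>\<beta>\<close> estimable) and continuity of \<open>\<psi>\<close>. The derivative is linear in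
  \<open>\<xi>\<close>, so it suffices to test the one-point designs \<open>I e\<^sub>j\<close>, which is the stated condition; its
  \<open>\<xi>\<^sup>*\<close>-weighted average is attained, whence equality on the support.\<close>

text \<open>Matrix-vector products with a transpose are kept in the form \<open>transpose A *v x\<close>.\<close>
declare transpose_matrix_vector[simp del] vector_transpose_matrix[simp del]

section \<open>Matrix algebra\<close>

lemma
  fixes X :: "'a::semiring_1^'n^'m"
  assumes "invertible X"
  shows matrix_inv_right: "X ** matrix_inv X = mat 1"
    and matrix_inv_left: "matrix_inv X ** X = mat 1"
proof -
  have "\<exists>Y. X ** Y = mat 1 \<and> Y ** X = mat 1"
    using assms by (simp add: invertible_def)
  then have "X ** matrix_inv X = mat 1 \<and> matrix_inv X ** X = mat 1"
    unfolding matrix_inv_def by (rule someI_ex)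
  then show "X ** matrix_inv X = mat 1" "matrix_inv X ** X = mat 1"
    by auto
qed

lemma matrix_inv_unique:
  fixes X Y :: "'a::field^'n^'n"
  assumes "X ** Y = mat 1"
  shows "matrix_inv X = Y"
proof -
  have inv: "invertible X"
    using assms invertible_right_inverse by blast
  have "matrix_inv X = matrix_inv X ** (X ** Y)"
    using assms by simp
  also have "\<dots> = Y"
    by (simp add: matrix_mul_assoc matrix_inv_left[OF inv])
  finally show ?thesis .
qed

lemma matrix_inv_unique_left:
  fixes X Y :: "'a::field^'n^'n"
  assumes "Y ** X = mat 1"
  shows "matrix_inv X = Y"
  using assms matrix_left_right_inverse matrix_inv_unique by blast

lemma matrix_inv_transpose:
  fixes X :: "'a::field^'n^'n"
  assumes "invertible X"
  shows "matrix_inv (transpose X) = transpose (matrix_inv X)"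
  by (metis matrix_inv_unique matrix_transpose_mul matrix_inv_left[OF assms] transpose_mat)

lemma invertible_iff_kernel_trivial:
  fixes X :: "'a::field^'n^'n"
  shows "invertible X \<longleftrightarrow> (\<forall>x. X *v x = 0 \<longrightarrow> x = 0)"
  using invertible_left_inverse matrix_left_invertible_ker by blast

lemma inner_matrix_vector_transpose:
  fixes X :: "real^'n^'m"
  shows "x \<bullet> (X *v y) = (transpose X *v x) \<bullet> y"
  by (metis dot_lmul_matrix transpose_matrix_vector)

lemma symmetric_matrix_inner_swap:
  fixes S :: "real^'n^'n"
  assumes "transpose S = S"
  shows "x \<bullet> (S *v y) = (S *v x) \<bullet> y"
  by (metis assms inner_matrix_vector_transpose)

lemma quadratic_form_diff:
  fixes S :: "real^'n^'n"
  assumes "transpose S = S"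
  shows "(x - y) \<bullet> (S *v (x - y)) = x \<bullet> (S *v x) - 2 * (x \<bullet> (S *v y)) + y \<bullet> (S *v y)"
  using symmetric_matrix_inner_swap[OF assms, of y x]
  by (simp add: matrix_vector_mult_diff_distrib inner_diff_left inner_diff_right inner_commute)

lemma matrix_inv_intertwine:
  fixes X Y P :: "real^'n^'n"
  assumes X: "invertible X" and Y: "invertible Y" and XP: "X ** P = P ** Y"
  shows "P ** matrix_inv Y = matrix_inv X ** P"
proof -
  have "P ** matrix_inv Y = matrix_inv X ** (X ** P) ** matrix_inv Y"
    by (simp add: matrix_mul_assoc matrix_inv_left[OF X])
  also have "\<dots> = matrix_inv X ** P"
    by (simp add: XP matrix_mul_assoc[symmetric] matrix_inv_right[OF Y])
  finally show ?thesis .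
qed

lemma matrix_add_rdistrib: "((A::'a::semiring_1^'n^'m) + B) ** C = A ** C + B ** C"
  by (simp add: matrix_matrix_mult_def vec_eq_iff sum.distrib distrib_right)

lemma matrix_diff_rdistrib: "((A::'a::ring_1^'n^'m) - B) ** C = A ** C - B ** C"
  by (simp add: matrix_matrix_mult_def vec_eq_iff sum_subtractf left_diff_distrib)

lemma matrix_diff_ldistrib: "(A::'a::ring_1^'n^'m) ** (B - C) = A ** B - A ** C"
  by (simp add: matrix_matrix_mult_def vec_eq_iff sum_subtractf right_diff_distrib)

lemma transpose_add: "transpose (A + B) = transpose A + transpose B"
  by (simp add: transpose_def vec_eq_iff)

lemma scaleR_matrix_vector_mult: "(k *\<^sub>R (A::real^'n^'m)) *v x = k *\<^sub>R (A *v x)"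
  by (simp add: matrix_vector_mult_def vec_eq_iff sum_distrib_left mult.assoc)

lemma trace_scaleR: "trace (k *\<^sub>R (X::real^'n^'n)) = k * trace X"
  by (simp add: trace_def sum_distrib_left)

lemma matrix_diagonal_entry: "(X::real^'n^'n) $ k $ k = axis k 1 \<bullet> (X *v axis k 1)"
  by (simp only: inner_axis' matrix_vector_mul_component inner_axis) simp

subsection \<open>Diagonal matrices\<close>

lemma sum_delta_left:
  fixes f :: "'n::finite \<Rightarrow> 'a::semiring_0"
  shows "(\<Sum>k\<in>UNIV. (if i = k then c k else 0) * f k) = c i * f i"
  by (simp add: if_distrib[of "\<lambda>x. x * _"] sum.delta cong: if_cong)

lemma sum_delta_right:
  fixes f :: "'n::finite \<Rightarrow> 'a::semiring_0"
  shows "(\<Sum>k\<in>UNIV. f k * (if k = i then c k else 0)) = f i * c i"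
  by (simp add: if_distrib[of "\<lambda>x. _ * x"] sum.delta' cong: if_cong)

lemma diag_mat_mult: "diag_mat a ** diag_mat b = diag_mat (\<chi> i. a$i * b$i)"
  by (simp add: diag_mat_def matrix_matrix_mult_def vec_eq_iff sum_delta_left)

lemma transpose_diag_mat [simp]: "transpose (diag_mat a) = diag_mat a"
  by (simp add: diag_mat_def transpose_def vec_eq_iff)

lemma diag_mat_one: "diag_mat (\<chi> i. 1) = mat 1"
  by (simp add: diag_mat_def mat_def vec_eq_iff)

lemma diag_mat_diff: "diag_mat a - diag_mat b = diag_mat (a - b)"
  by (simp add: diag_mat_def vec_eq_iff)

lemma diag_mat_vector_mult: "diag_mat d *v z = (\<chi> i. d$i * z$i)"
  by (simp add: diag_mat_def matrix_vector_mult_def vec_eq_iff sum_delta_left)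

lemma diag_mat_axis: "diag_mat l *v axis k 1 = (l$k) *\<^sub>R axis k (1::real)"
  by (simp add: diag_mat_vector_mult vec_eq_iff axis_def)

lemma inner_diag_mat: "y \<bullet> (diag_mat d *v z) = (\<Sum>i\<in>UNIV. d$i * y$i * z$i)"
  by (simp add: diag_mat_vector_mult inner_vec_def mult_ac)

lemma det_diag_mat: "det (diag_mat (l::real^'n)) = (\<Prod>i\<in>UNIV. l$i)"
  by (subst det_diagonal) (auto simp: diag_mat_def)

lemma trace_diag_mat: "trace (diag_mat (l::real^'n)) = (\<Sum>k\<in>UNIV. l$k)"
  by (simp add: trace_def diag_mat_def)

lemma trace_diag_mat_mult: "trace (diag_mat l ** (X::real^'n^'n)) = (\<Sum>k\<in>UNIV. l$k * X$k$k)"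
  by (simp add: trace_def diag_mat_def matrix_matrix_mult_def sum_delta_left)

lemma trace_mult_diag_mat: "trace ((X::real^'n^'n) ** diag_mat l) = (\<Sum>k\<in>UNIV. X$k$k * l$k)"
  by (simp add: trace_def diag_mat_def matrix_matrix_mult_def sum_delta_right)

lemma diag_mat_quadratic_nonneg:
  assumes "0 \<le> d"
  shows "0 \<le> z \<bullet> (diag_mat d *v z)"
  using assms by (auto simp: inner_diag_mat less_eq_vec_def mult.assoc intro!: sum_nonneg)

lemma diag_mat_quadratic_eq_0:
  assumes "0 \<le> d" "z \<bullet> (diag_mat d *v z) = 0"
  shows "diag_mat d *v z = 0"
proof -
  have "\<forall>i\<in>UNIV. d$i * z$i * z$i = 0"
    using assms
    by (subst sum_nonneg_eq_0_iff[symmetric]) (auto simp: inner_diag_mat less_eq_vec_def mult.assoc)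
  then show ?thesis
    by (simp add: diag_mat_vector_mult vec_eq_iff)
qed

section \<open>Spectral theorem for symmetric matrices\<close>

lemma quadratic_nonpos_imp_linear_coeff_0:
  fixes a b :: real
  assumes "\<And>t. 2 * t * b + t\<^sup>2 * a \<le> 0"
  shows "b = 0"
proof -
  define d where "d = 1 + \<bar>a\<bar>"
  have d: "d > 0" "2 * d + a > 0"
    by (auto simp: d_def)
  have "b\<^sup>2 * (2 * d + a) / d\<^sup>2 = 2 * (b / d) * b + (b / d)\<^sup>2 * a"
    using d by (simp add: field_simps power2_eq_square)
  also have "\<dots> \<le> 0"
    by (rule assms)
  finally have "b\<^sup>2 * (2 * d + a) \<le> 0"
    using d by (simp add: divide_le_0_iff)
  then show ?thesis
    using d by (simp add: mult_le_0_iff)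
qed

text \<open>A maximiser of the Rayleigh quotient on an invariant subspace is stationary in every
  direction of the subspace, so the residual \<open>S v - \<lambda> v\<close>, which lies in the subspace, is
  orthogonal to itself.\<close>
lemma rayleigh_maximiser_eigenvector:
  fixes S :: "real^'n^'n"
  assumes sym: "transpose S = S" and V: "subspace V" and inv: "\<And>x. x \<in> V \<Longrightarrow> S *v x \<in> V"
    and v: "v \<in> V" "v \<bullet> v = 1"
    and max: "\<And>y. y \<in> V \<Longrightarrow> y \<bullet> (S *v y) \<le> (v \<bullet> (S *v v)) * (y \<bullet> y)"
  shows "S *v v = (v \<bullet> (S *v v)) *\<^sub>R v"
proof -
  define lam where "lam = v \<bullet> (S *v v)"
  have stationary: "v \<bullet> (S *v w) = lam * (v \<bullet> w)" if w: "w \<in> V" for w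
  proof -
    have "v \<bullet> (S *v w) - lam * (v \<bullet> w) = 0"
    proof (rule quadratic_nonpos_imp_linear_coeff_0)
      fix t :: real
      let ?x = "v + t *\<^sub>R w"
      have "?x \<in> V"
        using V v w by (simp add: subspace_add subspace_scale)
      then have le: "?x \<bullet> (S *v ?x) \<le> lam * (?x \<bullet> ?x)"
        using max lam_def by blast
      have e1: "?x \<bullet> (S *v ?x) = lam + 2 * t * (v \<bullet> (S *v w)) + t\<^sup>2 * (w \<bullet> (S *v w))"
        using symmetric_matrix_inner_swap[OF sym, of w v]
        by (simp add: lam_def matrix_vector_right_distrib matrix_vector_mult_scaleR inner_add_left
            inner_add_right inner_commute[of "S *v w" v] power2_eq_square algebra_simps)
      have e2: "?x \<bullet> ?x = 1 + 2 * t * (v \<bullet> w) + t\<^sup>2 * (w \<bullet> w)"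
        using v by (simp add: inner_add_left inner_add_right inner_commute[of w v] power2_eq_square
            algebra_simps)
      have "2 * t * (v \<bullet> (S *v w) - lam * (v \<bullet> w)) + t\<^sup>2 * (w \<bullet> (S *v w) - lam * (w \<bullet> w))
          = (lam + 2 * t * (v \<bullet> (S *v w)) + t\<^sup>2 * (w \<bullet> (S *v w)))
            - lam * (1 + 2 * t * (v \<bullet> w) + t\<^sup>2 * (w \<bullet> w))"
        by (simp add: algebra_simps)
      also have "\<dots> \<le> 0"
        using le unfolding e1 e2 by simp
      finally show "2 * t * (v \<bullet> (S *v w) - lam * (v \<bullet> w))
          + t\<^sup>2 * (w \<bullet> (S *v w) - lam * (w \<bullet> w)) \<le> 0" .
    qed
    then show ?thesis
      by simp
  qed
  define u where "u = S *v v - lam *\<^sub>R v"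
  have "u \<in> V"
    using V inv v by (simp add: u_def subspace_diff subspace_scale)
  have "u \<bullet> u = (S *v v) \<bullet> u - lam * (v \<bullet> u)"
    by (simp add: u_def inner_diff_left)
  also have "\<dots> = 0"
    using stationary[OF \<open>u \<in> V\<close>] symmetric_matrix_inner_swap[OF sym, of v u] by simp
  finally show ?thesis
    by (simp add: u_def lam_def)
qed

lemma symmetric_invariant_subspace_eigenvector:
  fixes S :: "real^'n^'n"
  assumes sym: "transpose S = S" and V: "subspace V" and inv: "\<And>x. x \<in> V \<Longrightarrow> S *v x \<in> V"
    and x0: "x0 \<in> V" "x0 \<noteq> 0"
  obtains v c where "v \<in> V" "norm v = 1" "S *v v = c *\<^sub>R v"
proof -
  let ?K = "V \<inter> sphere 0 1" and ?f = "\<lambda>x. x \<bullet> (S *v x)"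
  have "compact ?K"
    using compact_Int_closed[OF compact_sphere closed_subspace[OF V]] by (simp add: Int_commute)
  moreover have "(1 / norm x0) *\<^sub>R x0 \<in> ?K"
    using x0 V by (simp add: subspace_scale)
  then have "?K \<noteq> {}"
    by blast
  moreover have "continuous_on ?K ?f"
    by (intro continuous_intros linear_continuous_on)
      (auto simp: linear_conv_bounded_linear[symmetric])
  ultimately have "\<exists>v\<in>?K. \<forall>y\<in>?K. ?f y \<le> ?f v"
    by (rule continuous_attains_sup)
  then obtain v where v: "v \<in> ?K" and vmax: "\<And>y. y \<in> ?K \<Longrightarrow> ?f y \<le> ?f v"
    by blast
  have bound: "?f y \<le> ?f v * (y \<bullet> y)" if y: "y \<in> V" for y
  proof (cases "y = 0")
    case False
    define s where "s = 1 / norm y"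
    have "s *\<^sub>R y \<in> ?K"
      using y False V by (simp add: subspace_scale s_def)
    then have "?f (s *\<^sub>R y) \<le> ?f v"
      by (rule vmax)
    moreover have "?f (s *\<^sub>R y) = s\<^sup>2 * ?f y"
      by (simp add: matrix_vector_mult_scaleR power2_eq_square)
    ultimately have "(y \<bullet> y) * (s\<^sup>2 * ?f y) \<le> (y \<bullet> y) * ?f v"
      by (simp add: mult_left_mono)
    moreover have "(y \<bullet> y) * s\<^sup>2 = 1"
      using False by (simp add: s_def power2_norm_eq_inner[symmetric] field_simps)
    ultimately show ?thesis
      by (simp add: mult.assoc[symmetric] mult.commute[of _ "y \<bullet> y"])
  qed simp
  have "v \<in> V" "v \<bullet> v = 1"
    using v by (auto simp: norm_eq_1)
  then have "S *v v = ?f v *\<^sub>R v"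
    using rayleigh_maximiser_eigenvector[OF sym V inv] bound by blast
  then show ?thesis
    using that v by auto
qed

lemma symmetric_eigenvector_orthogonal_complement:
  fixes S :: "real^'n^'n"
  assumes sym: "transpose S = S" and V: "subspace V" and inv: "\<And>x. x \<in> V \<Longrightarrow> S *v x \<in> V"
    and v: "v \<in> V" "v \<bullet> v = 1" "S *v v = c *\<^sub>R v"
  defines "V' \<equiv> {x \<in> V. v \<bullet> x = 0}"
  shows "subspace V'" and "\<And>x. x \<in> V' \<Longrightarrow> S *v x \<in> V'" and "dim V' < dim V"
    and "V \<subseteq> span (insert v V')"
proof -
  show V': "subspace V'"
    using V by (auto simp: V'_def subspace_def inner_add_right)
  show "S *v x \<in> V'" if "x \<in> V'" for x
    using that inv symmetric_matrix_inner_swap[OF sym, of v x] v by (auto simp: V'_def)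
  have "V' \<subseteq> V" "v \<notin> V'"
    using v by (auto simp: V'_def)
  then have "V' \<subset> V"
    using v by blast
  then show "dim V' < dim V"
    using V' V by (intro dim_psubset) (metis span_eq_iff)
  show "V \<subseteq> span (insert v V')"
  proof
    fix x assume "x \<in> V"
    then have "x - (v \<bullet> x) *\<^sub>R v \<in> V'"
      using v V by (simp add: V'_def subspace_diff subspace_scale inner_diff_right)
    then have "(v \<bullet> x) *\<^sub>R v + (x - (v \<bullet> x) *\<^sub>R v) \<in> span (insert v V')"
      by (intro span_add span_scale) (auto intro: span_base)
    then show "x \<in> span (insert v V')"
      by simp
  qed
qed

lemma symmetric_invariant_subspace_orthonormal_eigenbasis:
  fixes S :: "real^'n^'n"
  assumes sym: "transpose S = S"
  shows "subspace V \<Longrightarrow> (\<And>x. x \<in> V \<Longrightarrow> S *v x \<in> V) \<Longrightarrow>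
    \<exists>B \<subseteq> V. pairwise orthogonal B \<and> (\<forall>b\<in>B. norm b = 1 \<and> (\<exists>c. S *v b = c *\<^sub>R b)) \<and> V \<subseteq> span B"
proof (induction "dim V" arbitrary: V rule: less_induct)
  case less
  show ?case
  proof (cases "V \<subseteq> {0}")
    case True
    then show ?thesis
      by (intro exI[of _ "{}"]) auto
  next
    case False
    then obtain x0 where "x0 \<in> V" "x0 \<noteq> 0"
      by auto
    then obtain v c where v: "v \<in> V" "norm v = 1" "S *v v = c *\<^sub>R v"
      using symmetric_invariant_subspace_eigenvector[OF sym less.prems] by metis
    then have vv: "v \<bullet> v = 1"
      by (simp add: norm_eq_1)
    define V' where "V' = {x \<in> V. v \<bullet> x = 0}"
    note V' = symmetric_eigenvector_orthogonal_complement[OF sym less.prems v(1) vv v(3),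
        folded V'_def]
    obtain B' where B': "B' \<subseteq> V'" "pairwise orthogonal B'"
      "\<forall>b\<in>B'. norm b = 1 \<and> (\<exists>c. S *v b = c *\<^sub>R b)" "V' \<subseteq> span B'"
      using less.hyps[OF V'(3,1,2)] by meson
    show ?thesis
    proof (intro exI[of _ "insert v B'"] conjI)
      show "insert v B' \<subseteq> V" "\<forall>b\<in>insert v B'. norm b = 1 \<and> (\<exists>c. S *v b = c *\<^sub>R b)"
        using B'(1,3) v by (auto simp: V'_def)
      show "pairwise orthogonal (insert v B')"
        using B'(1,2) by (auto simp: pairwise_insert V'_def orthogonal_def inner_commute)
      have "insert v V' \<subseteq> span (insert v B')"
        using B'(4) span_mono[of B' "insert v B'"] by (auto intro: span_base)
      then show "V \<subseteq> span (insert v B')"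
        using V'(4) span_minimal[OF _ subspace_span] by blast
    qed
  qed
qed

lemma orthonormal_eigenvectors_diagonalize:
  fixes S :: "real^'n^'n" and f :: "'n \<Rightarrow> real^'n"
  assumes unit: "\<And>i. norm (f i) = 1" and orth: "\<And>i j. i \<noteq> j \<Longrightarrow> orthogonal (f i) (f j)"
    and eig: "\<And>j. S *v f j = (l $ j) *\<^sub>R f j"
  defines "Q \<equiv> \<chi> i j. f j $ i"
  shows "orthogonal_matrix Q" and "S = Q ** diag_mat l ** transpose Q"
proof -
  show Q: "orthogonal_matrix Q"
    using unit orth by (simp add: Q_def orthogonal_matrix_orthonormal_columns column_def)
  have "(S ** Q) $ i $ j = (Q ** diag_mat l) $ i $ j" for i j
  proof -
    have "(S ** Q) $ i $ j = (S *v f j) $ i"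
      by (simp add: Q_def matrix_matrix_mult_def matrix_vector_mult_def)
    also have "\<dots> = (Q ** diag_mat l) $ i $ j"
      by (simp add: eig Q_def diag_mat_def matrix_matrix_mult_def sum_delta_right)
    finally show ?thesis .
  qed
  then have "S ** Q = Q ** diag_mat l"
    by (simp add: vec_eq_iff)
  then show "S = Q ** diag_mat l ** transpose Q"
    using Q by (metis matrix_mul_assoc matrix_mul_rid orthogonal_matrix_def)
qed

lemma symmetric_matrix_spectral_decomposition:
  fixes S :: "real^'n^'n"
  assumes sym: "transpose S = S"
  obtains Q l where "orthogonal_matrix Q" "S = Q ** diag_mat l ** transpose Q"
proof -
  obtain B where B: "pairwise orthogonal B" "\<forall>b\<in>B. norm b = 1 \<and> (\<exists>c. S *v b = c *\<^sub>R b)"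
    "UNIV \<subseteq> span B"
    using symmetric_invariant_subspace_orthonormal_eigenbasis[OF sym, of UNIV] by auto
  have ind: "independent B"
    using B by (intro pairwise_orthogonal_independent) auto
  have "span B = UNIV"
    using B(3) by blast
  have "card B = dim (span B)"
    using dim_span_eq_card_independent[OF ind] by simp
  also have "\<dots> = CARD('n)"
    unfolding \<open>span B = UNIV\<close> by simp
  finally obtain f where f: "bij_betw f (UNIV::'n set) B"
    by (metis ind finiteI_independent finite_class.finite_UNIV finite_same_card_bij)
  then have fB: "f i \<in> B" for i
    by (auto simp: bij_betw_def)
  define l where "l = (\<chi> j. SOME c. S *v f j = c *\<^sub>R f j)"
  have "S *v f j = (l$j) *\<^sub>R f j" for j
  proof -
    have "\<exists>c. S *v f j = c *\<^sub>R f j"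
      using B(2) fB by blast
    from someI_ex[OF this] show ?thesis
      by (simp add: l_def)
  qed
  moreover have "norm (f i) = 1" for i
    using B(2) fB by blast
  moreover have "orthogonal (f i) (f j)" if "i \<noteq> j" for i j
    using B(1) f that by (auto simp: pairwise_def bij_betw_def inj_on_def)
  ultimately show ?thesis
    using orthonormal_eigenvectors_diagonalize that by blast
qed

section \<open>Positive definite matrices\<close>

definition psd :: "real^'n^'n \<Rightarrow> bool" where
  "psd S \<longleftrightarrow> transpose S = S \<and> (\<forall>x. 0 \<le> x \<bullet> (S *v x))"

definition pd :: "real^'n^'n \<Rightarrow> bool" where
  "pd S \<longleftrightarrow> transpose S = S \<and> (\<forall>x. x \<noteq> 0 \<longrightarrow> 0 < x \<bullet> (S *v x))"

lemma pd_imp_psd: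
  assumes "pd S"
  shows "psd S"
  unfolding psd_def
proof (intro conjI allI)
  show "transpose S = S"
    using assms by (simp add: pd_def)
  show "0 \<le> x \<bullet> (S *v x)" for x
    using assms unfolding pd_def by (cases "x = 0") (auto intro: less_imp_le)
qed

lemma orthogonal_matrix_column_inner:
  fixes Q :: "real^'n^'n"
  assumes "orthogonal_matrix Q"
  shows "(Q *v axis k 1) \<bullet> (Q *v axis k 1) = 1"
proof -
  have "(Q *v axis k 1) \<bullet> (Q *v axis k 1) = axis k 1 \<bullet> ((transpose Q ** Q) *v axis k 1)"
    by (simp only: matrix_vector_mul_assoc[symmetric] inner_matrix_vector_transpose
        transpose_transpose)
  also have "\<dots> = 1"
    using assms by (simp add: orthogonal_matrix_def inner_axis_axis)
  finally show ?thesis .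
qed

lemma spectral_decomposition_eigenvalue:
  fixes Q :: "real^'n^'n"
  assumes Q: "orthogonal_matrix Q" and S: "S = Q ** diag_mat l ** transpose Q"
  shows "(Q *v axis k 1) \<bullet> (S *v (Q *v axis k 1)) = l $ k"
proof -
  have "S *v (Q *v axis k 1) = Q *v (diag_mat l *v ((transpose Q ** Q) *v axis k 1))"
    unfolding S by (simp only: matrix_vector_mul_assoc matrix_mul_assoc)
  also have "\<dots> = l$k *\<^sub>R (Q *v axis k 1)"
    using Q by (simp add: orthogonal_matrix_def diag_mat_axis matrix_vector_mult_scaleR)
  finally show ?thesis
    using orthogonal_matrix_column_inner[OF Q] by simp
qed

lemma psd_eigenvalue_nonneg:
  assumes "psd S" "orthogonal_matrix Q" "S = Q ** diag_mat l ** transpose Q"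
  shows "0 \<le> l $ k"
  using assms(1) spectral_decomposition_eigenvalue[OF assms(2,3)] unfolding psd_def by metis

lemma pd_eigenvalue_pos:
  assumes "pd S" "orthogonal_matrix Q" "S = Q ** diag_mat l ** transpose Q"
  shows "0 < l $ k"
proof -
  have "Q *v axis k 1 \<noteq> 0"
    using orthogonal_matrix_column_inner[OF assms(2), of k] by auto
  then show ?thesis
    using assms(1) spectral_decomposition_eigenvalue[OF assms(2,3)] unfolding pd_def by metis
qed

lemma det_spectral_decomposition:
  fixes Q :: "real^'n^'n"
  assumes "orthogonal_matrix Q" "S = Q ** diag_mat l ** transpose Q"
  shows "det S = (\<Prod>i\<in>UNIV. l$i)"
proof -
  have "det Q * det Q = 1"
    using det_orthogonal_matrix[OF assms(1)] by auto
  then show ?thesis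
    using assms(2) by (simp add: det_mul det_diag_mat)
qed

lemma trace_spectral_decomposition:
  fixes Q :: "real^'n^'n"
  assumes "orthogonal_matrix Q" "S = Q ** diag_mat l ** transpose Q"
  shows "trace S = (\<Sum>i\<in>UNIV. l$i)"
proof -
  have "trace S = trace (diag_mat l ** transpose Q ** Q)"
    using assms(2) trace_mul_sym[of Q "diag_mat l ** transpose Q"]
    by (simp add: matrix_mul_assoc)
  also have "\<dots> = trace (diag_mat l)"
    using assms(1) by (simp add: orthogonal_matrix_def matrix_mul_assoc[symmetric])
  finally show ?thesis
    by (simp add: trace_diag_mat)
qed

lemma pd_det_pos:
  assumes "pd S"
  shows "0 < det S"
proof -
  obtain Q l where Q: "orthogonal_matrix Q" "S = Q ** diag_mat l ** transpose Q"
    using symmetric_matrix_spectral_decomposition assms pd_def by metis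
  then show ?thesis
    using pd_eigenvalue_pos[OF assms Q] det_spectral_decomposition[OF Q] by (simp add: prod_pos)
qed

lemma pd_invertible: "pd S \<Longrightarrow> invertible S"
  using pd_det_pos invertible_det_nz by force

lemma pd_matrix_inv:
  fixes M :: "real^'n^'n"
  assumes "pd M"
  shows "pd (matrix_inv M)"
  unfolding pd_def
proof (intro conjI allI impI)
  have inv: "invertible M"
    using pd_invertible[OF assms] .
  then show "transpose (matrix_inv M) = matrix_inv M"
    using matrix_inv_transpose[OF inv] assms unfolding pd_def by simp
  fix x :: "real^'n" assume "x \<noteq> 0"
  define y where "y = matrix_inv M *v x"
  have x: "x = M *v y"
    by (simp add: y_def matrix_vector_mul_assoc matrix_inv_right[OF inv])
  then have "y \<noteq> 0"
    using \<open>x \<noteq> 0\<close> by auto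
  moreover have "x \<bullet> (matrix_inv M *v x) = y \<bullet> (M *v y)"
    unfolding y_def[symmetric] using x by (simp add: inner_commute)
  ultimately show "0 < x \<bullet> (matrix_inv M *v x)"
    using assms by (simp add: pd_def)
qed

lemma pd_congruence:
  fixes M H :: "real^'n^'n"
  assumes M: "pd M" and H: "invertible H"
  shows "pd (H ** M ** transpose H)"
  unfolding pd_def
proof (intro conjI allI impI)
  show "transpose (H ** M ** transpose H) = H ** M ** transpose H"
    using M by (simp add: pd_def matrix_transpose_mul matrix_mul_assoc)
  fix x :: "real^'n" assume "x \<noteq> 0"
  then have "transpose H *v x \<noteq> 0"
    using transpose_invertible[OF H] unfolding invertible_iff_kernel_trivial by blast
  then have "0 < (transpose H *v x) \<bullet> (M *v (transpose H *v x))"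
    using M by (simp add: pd_def)
  also have "\<dots> = x \<bullet> ((H ** M ** transpose H) *v x)"
    by (simp only: inner_matrix_vector_transpose matrix_vector_mul_assoc[symmetric] transpose_transpose)
  finally show "0 < x \<bullet> ((H ** M ** transpose H) *v x)" .
qed

lemma psd_congruence:
  fixes H :: "real^'m^'n"
  assumes "psd S"
  shows "psd (transpose H ** S ** H)"
  unfolding psd_def
proof (intro conjI allI)
  show "transpose (transpose H ** S ** H) = transpose H ** S ** H"
    using assms by (simp add: psd_def matrix_transpose_mul matrix_mul_assoc)
  fix x
  have "x \<bullet> ((transpose H ** S ** H) *v x) = (H *v x) \<bullet> (S *v (H *v x))"
    by (simp only: inner_matrix_vector_transpose matrix_vector_mul_assoc[symmetric] transpose_transpose)
  then show "0 \<le> x \<bullet> ((transpose H ** S ** H) *v x)"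
    using assms by (simp add: psd_def)
qed

lemma invertible_scaleR_id_plus_psd:
  assumes "0 < s" "psd P"
  shows "invertible (s *\<^sub>R mat 1 + P)"
  unfolding invertible_iff_kernel_trivial
proof (intro allI impI)
  fix x assume "(s *\<^sub>R mat 1 + P) *v x = 0"
  then have "0 = x \<bullet> ((s *\<^sub>R mat 1 + P) *v x)"
    by simp
  also have "\<dots> = s * (x \<bullet> x) + x \<bullet> (P *v x)"
    by (simp add: matrix_vector_mult_add_rdistrib scaleR_matrix_vector_mult inner_add_right)
  moreover have "0 \<le> x \<bullet> (P *v x)"
    using assms(2) by (simp add: psd_def)
  ultimately have "s * (x \<bullet> x) \<le> 0"
    by linarith
  then have "x \<bullet> x \<le> 0"
    using assms(1) by (simp add: mult_le_0_iff)
  then show "x = 0"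
    by (meson inner_gt_zero_iff not_le)
qed

lemma pd_congruent_identity:
  fixes M :: "real^'n^'n"
  assumes "pd M"
  obtains H :: "real^'n^'n" where "invertible H" "H ** M ** transpose H = mat 1"
proof -
  obtain Q l where Q: "orthogonal_matrix Q" "M = Q ** diag_mat l ** transpose Q"
    using symmetric_matrix_spectral_decomposition assms pd_def by metis
  have l: "0 < l $ i" for i
    using pd_eigenvalue_pos[OF assms Q] .
  have QQ: "transpose Q ** Q = mat 1"
    using Q(1) by (simp add: orthogonal_matrix_def)
  define g where "g = (\<chi> i. 1 / sqrt (l$i))"
  define H where "H = diag_mat g ** transpose Q"
  have "H ** (Q ** diag_mat (\<chi> i. sqrt (l$i))) = diag_mat g ** (transpose Q ** Q) ** diag_mat (\<chi> i. sqrt (l$i))"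
    by (simp add: H_def matrix_mul_assoc)
  also have "\<dots> = mat 1"
  proof -
    have "l$i \<noteq> 0" for i
      using l[of i] by simp
    then have "(\<chi> i. g$i * sqrt (l$i)) = (\<chi> i. 1)"
      by (simp add: vec_eq_iff g_def)
    then show ?thesis
      by (simp add: QQ diag_mat_mult diag_mat_one)
  qed
  finally have "invertible H"
    using invertible_right_inverse by blast
  moreover have "H ** M ** transpose H = mat 1"
  proof -
    have "H ** M ** transpose H
        = diag_mat g ** (transpose Q ** Q) ** diag_mat l ** (transpose Q ** Q) ** diag_mat g"
      by (simp add: H_def Q(2) matrix_transpose_mul matrix_mul_assoc)
    also have "\<dots> = diag_mat (\<chi> i. g$i * l$i * g$i)"
      by (simp add: QQ diag_mat_mult)
    also have "(\<chi> i. g$i * l$i * g$i) = (\<chi> i. 1)"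
    proof -
      have "g$i * l$i * g$i = 1" for i
        using l[of i] real_sqrt_mult_self[of "l$i"] by (simp add: g_def field_simps)
      then show ?thesis
        by (simp add: vec_eq_iff)
    qed
    finally show ?thesis
      by (simp add: diag_mat_one)
  qed
  ultimately show ?thesis
    by (rule that)
qed

lemma trace_psd_mult_nonneg:
  assumes P: "psd P" and Y: "\<And>x. 0 \<le> x \<bullet> (Y *v x)"
  shows "0 \<le> trace (P ** Y)"
proof -
  obtain Q l where Q: "orthogonal_matrix Q" "P = Q ** diag_mat l ** transpose Q"
    using symmetric_matrix_spectral_decomposition P psd_def by metis
  have "trace (P ** Y) = trace (diag_mat l ** (transpose Q ** Y ** Q))"
    using Q(2) trace_mul_sym[of Q "diag_mat l ** transpose Q ** Y"] by (simp add: matrix_mul_assoc)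
  also have "\<dots> = (\<Sum>k\<in>UNIV. l$k * (transpose Q ** Y ** Q)$k$k)"
    by (rule trace_diag_mat_mult)
  also have "\<dots> \<ge> 0"
  proof (rule sum_nonneg)
    fix k
    have "(transpose Q ** Y ** Q)$k$k = (Q *v axis k 1) \<bullet> (Y *v (Q *v axis k 1))"
      by (simp only: matrix_diagonal_entry matrix_vector_mul_assoc[symmetric]
          inner_matrix_vector_transpose transpose_transpose)
    then show "0 \<le> l$k * (transpose Q ** Y ** Q)$k$k"
      using psd_eigenvalue_nonneg[OF P Q] Y by simp
  qed
  finally show ?thesis .
qed

lemma ln_det_le_trace:
  fixes X :: "real^'n^'n"
  assumes "pd X"
  shows "ln (det X) \<le> trace X - CARD('n)"
proof -
  obtain Q l where Q: "orthogonal_matrix Q" "X = Q ** diag_mat l ** transpose Q"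
    using symmetric_matrix_spectral_decomposition assms pd_def by metis
  have l: "0 < l $ i" for i
    using pd_eigenvalue_pos[OF assms Q] .
  have l0: "l$i \<noteq> 0" for i
    using l[of i] by simp
  have "ln (det X) = (\<Sum>i\<in>UNIV. ln (l$i))"
    unfolding det_spectral_decomposition[OF Q] by (rule ln_prod) (simp_all add: l0)
  also have "\<dots> \<le> (\<Sum>i\<in>UNIV. l$i - 1)"
    using l by (intro sum_mono ln_le_minus_one)
  also have "\<dots> = trace X - CARD('n)"
    by (simp add: trace_spectral_decomposition[OF Q] sum_subtractf)
  finally show ?thesis .
qed

lemma ln_det_le_tangent:
  fixes M M' :: "real^'n^'n"
  assumes M: "pd M" and M': "pd M'"
  shows "ln (det M') - ln (det M) \<le> trace (matrix_inv M ** (M' - M))"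
proof -
  obtain H :: "real^'n^'n" where H: "invertible H" "H ** M ** transpose H = mat 1"
    using pd_congruent_identity[OF M] by blast
  define X where "X = H ** M' ** transpose H"
  have X: "pd X"
    unfolding X_def using pd_congruence[OF M' H(1)] .
  have "transpose H ** (H ** M) = mat 1"
    using matrix_left_right_inverse[THEN iffD1, OF H(2)] .
  then have Minv: "matrix_inv M = transpose H ** H"
    by (intro matrix_inv_unique_left) (simp add: matrix_mul_assoc)
  have "det H * det M * det H = 1"
    using arg_cong[OF H(2), of det] by (simp add: det_mul det_transpose)
  moreover have "det X = det H * det M' * det H"
    by (simp add: X_def det_mul det_transpose)
  ultimately have "det X * det M = det M'"
    by (simp add: algebra_simps)
  then have "ln (det M') - ln (det M) = ln (det X)"
    using ln_mult_pos[OF pd_det_pos[OF X] pd_det_pos[OF M]] by simp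
  also have "\<dots> \<le> trace X - CARD('n)"
    using ln_det_le_trace[OF X] .
  also have "trace X = trace (matrix_inv M ** M')"
    unfolding X_def Minv using trace_mul_sym[of H "M' ** transpose H"]
      trace_mul_sym[of "M'" "transpose H ** H"] by (simp add: matrix_mul_assoc)
  also have "trace (matrix_inv M ** M') - CARD('n) = trace (matrix_inv M ** (M' - M))"
    using matrix_inv_left[OF pd_invertible[OF M]]
    by (simp add: matrix_diff_ldistrib trace_sub trace_I)
  finally show ?thesis .
qed

section \<open>Continuity of matrix operations\<close>

lemma tendsto_matrix_matrix_mult [tendsto_intros]:
  fixes f :: "'a \<Rightarrow> real^'n^'m" and g :: "'a \<Rightarrow> real^'p^'n"
  assumes "(f \<longlongrightarrow> a) F" "(g \<longlongrightarrow> b) F"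
  shows "((\<lambda>t. f t ** g t) \<longlongrightarrow> a ** b) F"
  unfolding matrix_matrix_mult_def by (intro tendsto_intros assms)

lemma tendsto_det [tendsto_intros]:
  fixes f :: "'a \<Rightarrow> real^'n^'n"
  assumes "(f \<longlongrightarrow> a) F"
  shows "((\<lambda>t. det (f t)) \<longlongrightarrow> det a) F"
  unfolding det_def by (intro tendsto_intros assms)

lemma tendsto_diag_mat [tendsto_intros]:
  fixes f :: "'a \<Rightarrow> real^'n"
  assumes "(f \<longlongrightarrow> a) F"
  shows "((\<lambda>t. diag_mat (f t)) \<longlongrightarrow> diag_mat a) F"
  unfolding diag_mat_def
  by (intro tendsto_vec_lambda) (simp add: tendsto_vec_nth assms)

lemma matrix_inv_cramer:
  fixes X :: "real^'n^'n"
  assumes "det X \<noteq> 0"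
  shows "matrix_inv X = (\<chi> i j. det (\<chi> r c. if c = i then axis j 1 $ r else X $ r $ c) / det X)"
proof -
  have iX: "invertible X"
    using assms invertible_det_nz by blast
  have "matrix_inv X $ i $ j = det (\<chi> r c. if c = i then axis j 1 $ r else X $ r $ c) / det X"
    for i j
  proof -
    have "X *v (matrix_inv X *v axis j 1) = axis j 1"
      by (simp add: matrix_vector_mul_assoc matrix_inv_right[OF iX])
    then have "(matrix_inv X *v axis j 1) $ i
        = det (\<chi> r c. if c = i then axis j 1 $ r else X $ r $ c) / det X"
      using cramer[OF assms] by simp
    moreover have "(matrix_inv X *v axis j 1) $ i = matrix_inv X $ i $ j"
      by (simp add: matrix_vector_mult_def axis_def sum_delta_right)
    ultimately show ?thesis
      by simp
  qed
  then show ?thesis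
    by (simp add: vec_eq_iff)
qed

lemma tendsto_matrix_inv:
  fixes f :: "'a \<Rightarrow> real^'n^'n"
  assumes f: "(f \<longlongrightarrow> a) F" and a: "invertible a"
  shows "((\<lambda>t. matrix_inv (f t)) \<longlongrightarrow> matrix_inv a) F"
proof -
  let ?cramer = "\<lambda>X::real^'n^'n.
    (\<chi> i j. det (\<chi> r c. if c = i then axis j 1 $ r else X $ r $ c) / det X)"
  have "det a \<noteq> 0"
    using a invertible_det_nz by blast
  have "((\<lambda>t. ?cramer (f t)) \<longlongrightarrow> ?cramer a) F"
    by (intro tendsto_vec_lambda tendsto_divide tendsto_det \<open>det a \<noteq> 0\<close>)
      (simp_all add: f tendsto_vec_nth)
  moreover have "eventually (\<lambda>t. ?cramer (f t) = matrix_inv (f t)) F"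
    using tendsto_imp_eventually_ne[OF tendsto_det[OF f] \<open>det a \<noteq> 0\<close>]
    by eventually_elim (simp add: matrix_inv_cramer)
  ultimately show ?thesis
    unfolding matrix_inv_cramer[OF \<open>det a \<noteq> 0\<close>] by (rule Lim_transform_eventually)
qed

section \<open>Designs\<close>

lemma is_design_nonneg: "is_design Itot xi \<Longrightarrow> 0 \<le> xi"
  by (simp add: is_design_def less_eq_vec_def)

lemma is_design_axis: "0 \<le> Itot \<Longrightarrow> is_design Itot (Itot *\<^sub>R axis j 1)"
  by (simp add: is_design_def axis_def if_distrib[of "\<lambda>x. Itot * x"] cong: if_cong)

lemma is_design_segment:
  assumes "is_design Itot x" "is_design Itot y" "0 \<le> t" "t \<le> 1"
  shows "is_design Itot (x + t *\<^sub>R (y - x))"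
proof -
  have comp: "(x + t *\<^sub>R (y - x)) $ j = (1 - t) * x $ j + t * y $ j" for j
    by (simp add: algebra_simps)
  have "(\<Sum>j\<in>UNIV. (1 - t) * x $ j + t * y $ j) = (1 - t) * Itot + t * Itot"
    using assms(1,2) by (simp add: is_design_def sum.distrib sum_distrib_left[symmetric])
  also have "\<dots> = Itot"
    by (simp add: algebra_simps)
  moreover have "0 \<le> (1 - t) * x $ j + t * y $ j" for j
    using assms by (simp add: is_design_def)
  ultimately show ?thesis
    unfolding is_design_def comp by simp
qed

lemma transpose_M0 [simp]: "transpose (M0 xi) = M0 xi"
  by (simp add: M0_def)

lemma transpose_M0_sqrt [simp]: "transpose (M0_sqrt xi) = M0_sqrt xi"
  by (simp add: M0_sqrt_def)

lemma column_M0: "column k (M0 xi) = (xi $ k) *\<^sub>R axis k 1"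
  by (simp add: column_def M0_def diag_mat_def axis_def vec_eq_iff)

lemma M0_sqrt_mult_self:
  assumes "0 \<le> xi"
  shows "M0_sqrt xi ** M0_sqrt xi = M0 xi"
proof -
  have "(\<chi> i. (\<chi> j. sqrt (xi $ j)) $ i * (\<chi> j. sqrt (xi $ j)) $ i) = xi"
    using assms by (simp add: vec_eq_iff less_eq_vec_def)
  then show ?thesis
    by (simp add: M0_sqrt_def M0_def diag_mat_mult)
qed

lemma tendsto_M0 [tendsto_intros]: "(f \<longlongrightarrow> xi) F \<Longrightarrow> ((\<lambda>t. M0 (f t)) \<longlongrightarrow> M0 xi) F"
  unfolding M0_def by (rule tendsto_diag_mat)

lemma tendsto_M0_sqrt [tendsto_intros]:
  "(f \<longlongrightarrow> xi) F \<Longrightarrow> ((\<lambda>t. M0_sqrt (f t)) \<longlongrightarrow> M0_sqrt xi) F"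
  unfolding M0_sqrt_def by (intro tendsto_diag_mat tendsto_vec_lambda tendsto_intros)

lemma estimable_support_mono:
  assumes "estimable A x" and "\<And>k. x $ k \<noteq> 0 \<Longrightarrow> y $ k \<noteq> 0"
  shows "estimable A y"
proof -
  have "column k (M0 x) \<in> span (columns (M0 y))" for k
  proof (cases "x $ k = 0")
    case False
    have "column k (M0 x) = (x $ k / y $ k) *\<^sub>R column k (M0 y)"
      using assms(2)[OF False] by (simp add: column_M0)
    moreover have "column k (M0 y) \<in> span (columns (M0 y))"
      by (rule span_base) (auto simp: columns_def)
    ultimately show ?thesis
      by (simp add: span_scale)
  qed (simp add: column_M0 span_zero)
  then have "span (columns (M0 x)) \<subseteq> span (columns (M0 y))"
    by (intro span_minimal) (auto simp: columns_def)
  then show ?thesis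
    using assms(1) unfolding estimable_def by blast
qed

lemma estimable_design_segment:
  assumes x: "is_design Itot x" "estimable A x" and y: "is_design Itot y"
    and t: "0 \<le> t" "t < 1"
  shows "estimable A (x + t *\<^sub>R (y - x))"
proof (rule estimable_support_mono[OF x(2)])
  fix k assume "x $ k \<noteq> 0"
  moreover have "0 \<le> x $ k" "0 \<le> y $ k"
    using is_design_nonneg[OF x(1)] is_design_nonneg[OF y] by (simp_all add: less_eq_vec_def)
  ultimately have "0 < (1 - t) * x $ k" "0 \<le> t * y $ k"
    using t by (simp_all add: less_le)
  moreover have "(x + t *\<^sub>R (y - x)) $ k = (1 - t) * x $ k + t * y $ k"
    by (simp add: algebra_simps)
  ultimately show "(x + t *\<^sub>R (y - x)) $ k \<noteq> 0"
    by simp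
qed

lemma estimable_vanishes_off_support:
  fixes A :: "real^'p^'j"
  assumes "estimable A xi" "xi $ i = 0"
  shows "(A *v x) $ i = 0"
proof -
  define T :: "(real^'j) set" where "T = {v. v $ i = 0}"
  have T: "subspace T"
    by (auto simp: T_def subspace_def)
  have "columns (M0 xi) \<subseteq> T"
    using assms(2) by (auto simp: T_def columns_def column_M0 axis_def)
  then have "columns A \<subseteq> T"
    using assms(1) span_minimal[OF _ T] unfolding estimable_def by blast
  then have "(\<Sum>k\<in>UNIV. x $ k *\<^sub>R column k A) \<in> T"
    by (intro subspace_sum[OF T] subspace_scale[OF T]) (auto simp: columns_def)
  then show ?thesis
    by (simp add: T_def matrix_mult_sum scalar_mult_eq_scaleR)
qed

lemma design_directional_nonpos_iff:
  fixes p :: "'j::finite \<Rightarrow> real"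
  assumes Itot: "0 < Itot" and xs: "is_design Itot xs"
  shows "(\<forall>y. is_design Itot y \<longrightarrow> (\<Sum>j\<in>UNIV. (y $ j - xs $ j) * p j) \<le> 0)
    \<longleftrightarrow> (\<forall>j. p j \<le> (1 / Itot) * (\<Sum>l\<in>UNIV. xs $ l * p l))"
    (is "?dir \<longleftrightarrow> (\<forall>j. p j \<le> ?c)")
proof
  assume dir: ?dir
  show "\<forall>j. p j \<le> ?c"
  proof
    fix j :: 'j
    have "is_design Itot (Itot *\<^sub>R axis j 1)"
      using Itot by (simp add: is_design_axis)
    then have "(\<Sum>l\<in>UNIV. ((Itot *\<^sub>R axis j 1) $ l - xs $ l) * p l) \<le> 0"
      using dir by blast
    moreover have "(\<Sum>l\<in>UNIV. (Itot *\<^sub>R axis j 1) $ l * p l)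
        = (\<Sum>l\<in>UNIV. if l = j then Itot * p j else 0)"
      by (intro sum.cong) (auto simp: axis_def)
    ultimately have "Itot * p j - (\<Sum>l\<in>UNIV. xs $ l * p l) \<le> 0"
      by (simp add: left_diff_distrib sum_subtractf)
    then show "p j \<le> ?c"
      using Itot by (simp add: field_simps)
  qed
next
  assume le: "\<forall>j. p j \<le> ?c"
  show ?dir
  proof (intro allI impI)
    fix y :: "real^'j" assume y: "is_design Itot y"
    have "(\<Sum>j\<in>UNIV. y $ j * p j) \<le> (\<Sum>j\<in>UNIV. y $ j * ?c)"
      using le y by (intro sum_mono mult_left_mono) (auto simp: is_design_def)
    also have "\<dots> = (\<Sum>j\<in>UNIV. y $ j) * ?c"
      by (rule sum_distrib_right[symmetric])
    also have "\<dots> = (\<Sum>l\<in>UNIV. xs $ l * p l)"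
      using y Itot by (simp add: is_design_def)
    finally show "(\<Sum>j\<in>UNIV. (y $ j - xs $ j) * p j) \<le> 0"
      by (simp add: left_diff_distrib sum_subtractf)
  qed
qed

lemma design_average_attained_on_support:
  fixes p :: "'j::finite \<Rightarrow> real"
  assumes Itot: "0 < Itot" and xs: "is_design Itot xs"
    and le: "\<forall>l. p l \<le> (1 / Itot) * (\<Sum>l\<in>UNIV. xs $ l * p l)" and pos: "0 < xs $ j"
  shows "p j = (1 / Itot) * (\<Sum>l\<in>UNIV. xs $ l * p l)"
proof -
  define c where "c = (1 / Itot) * (\<Sum>l\<in>UNIV. xs $ l * p l)"
  have nonneg: "0 \<le> xs $ l * (c - p l)" for l
    using le xs by (simp add: c_def is_design_def)
  have "(\<Sum>l\<in>UNIV. xs $ l * (c - p l)) = c * (\<Sum>l\<in>UNIV. xs $ l) - (\<Sum>l\<in>UNIV. xs $ l * p l)"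
    by (simp add: right_diff_distrib sum_subtractf sum_distrib_left mult.commute)
  also have "\<dots> = 0"
    using xs Itot by (simp add: c_def is_design_def)
  finally have "xs $ j * (c - p j) = 0"
    using nonneg by (simp add: sum_nonneg_eq_0_iff)
  then show ?thesis
    using pos by (simp add: c_def)
qed

section \<open>The information matrix\<close>

locale random_effects_model =
  fixes s2 :: real and Sg :: "real^'j::finite^'j"
  assumes s2_pos: "0 < s2" and Sg_psd: "psd Sg"
begin

definition SgM :: "real^'j \<Rightarrow> real^'j^'j" where
  "SgM xi = s2 *\<^sub>R mat 1 + Sg ** M0 xi"

definition MSg :: "real^'j \<Rightarrow> real^'j^'j" where
  "MSg xi = s2 *\<^sub>R mat 1 + M0 xi ** Sg"

definition weight :: "real^'j \<Rightarrow> real^'j^'j" where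
  "weight xi = matrix_inv (MSg xi) ** M0 xi"

lemma Sg_symmetric: "transpose Sg = Sg"
  using Sg_psd by (simp add: psd_def)

lemma transpose_SgM: "transpose (SgM xi) = MSg xi"
  by (simp add: SgM_def MSg_def transpose_add transpose_scalar matrix_transpose_mul Sg_symmetric)

lemma SgM_vector_mult: "SgM xi *v z = s2 *\<^sub>R z + Sg *v (M0 xi *v z)"
  by (simp add: SgM_def matrix_vector_mult_add_rdistrib scaleR_matrix_vector_mult
      matrix_vector_mul_assoc)

lemma psi_eq:
  "psi s2 Sg A xi j =
    (matrix_inv (SgM xi) ** A ** matrix_inv (Mbeta s2 Sg A xi) ** transpose A ** matrix_inv (MSg xi)) $ j $ j"
  by (simp add: psi_def SgM_def MSg_def)

lemma invertible_SgM:
  assumes "0 \<le> xi"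
  shows "invertible (SgM xi)"
  unfolding invertible_iff_kernel_trivial
proof (intro allI impI)
  fix z assume "SgM xi *v z = 0"
  then have z: "s2 *\<^sub>R z + Sg *v (M0 xi *v z) = 0"
    by (simp add: SgM_vector_mult)
  define w where "w = M0 xi *v z"
  have "0 = w \<bullet> (s2 *\<^sub>R z + Sg *v w)"
    using z by (simp add: w_def)
  also have "\<dots> = s2 * (z \<bullet> (M0 xi *v z)) + w \<bullet> (Sg *v w)"
    by (simp add: w_def inner_add_right inner_commute)
  finally have "s2 * (z \<bullet> (M0 xi *v z)) + w \<bullet> (Sg *v w) = 0" ..
  moreover have "0 \<le> s2 * (z \<bullet> (M0 xi *v z))"
    using assms s2_pos by (simp add: M0_def diag_mat_quadratic_nonneg)
  moreover have "0 \<le> w \<bullet> (Sg *v w)"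
    using Sg_psd by (simp add: psd_def)
  ultimately have "s2 * (z \<bullet> (M0 xi *v z)) = 0"
    by linarith
  then have "z \<bullet> (M0 xi *v z) = 0"
    using s2_pos by simp
  then have "w = 0"
    unfolding w_def M0_def using assms by (rule diag_mat_quadratic_eq_0[rotated])
  then show "z = 0"
    using z s2_pos by (simp add: w_def)
qed

lemma invertible_MSg: "0 \<le> xi \<Longrightarrow> invertible (MSg xi)"
  using transpose_invertible[OF invertible_SgM] by (simp add: transpose_SgM)

lemma transpose_matrix_inv_MSg:
  assumes "0 \<le> xi"
  shows "transpose (matrix_inv (MSg xi)) = matrix_inv (SgM xi)"
  using matrix_inv_transpose[OF invertible_SgM[OF assms]] by (simp add: transpose_SgM)

lemma weight_eq:
  assumes "0 \<le> xi"
  shows "weight xi = M0 xi ** matrix_inv (SgM xi)"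
proof -
  have "MSg xi ** M0 xi = M0 xi ** SgM xi"
    by (simp add: MSg_def SgM_def matrix_add_rdistrib matrix_add_ldistrib matrix_scalar_ac
        scalar_matrix_assoc[symmetric] matrix_mul_assoc)
  then show ?thesis
    unfolding weight_def
    using matrix_inv_intertwine[OF invertible_MSg[OF assms] invertible_SgM[OF assms]] by simp
qed

lemma transpose_weight:
  assumes "0 \<le> xi"
  shows "transpose (weight xi) = weight xi"
proof -
  have "transpose (weight xi) = M0 xi ** matrix_inv (SgM xi)"
    by (simp add: weight_def matrix_transpose_mul transpose_matrix_inv_MSg[OF assms])
  then show ?thesis
    by (simp add: weight_eq[OF assms])
qed

lemma weight_coordinates:
  assumes "0 \<le> xi" and z: "z = matrix_inv (SgM xi) *v v"
  shows "v = s2 *\<^sub>R z + Sg *v (M0 xi *v z)" and "weight xi *v v = M0 xi *v z"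
proof -
  have "SgM xi *v z = v"
    by (simp add: z matrix_vector_mul_assoc matrix_inv_right[OF invertible_SgM[OF assms(1)]])
  then show "v = s2 *\<^sub>R z + Sg *v (M0 xi *v z)"
    by (simp add: SgM_vector_mult)
  show "weight xi *v v = M0 xi *v z"
    by (simp add: weight_eq[OF assms(1)] z matrix_vector_mul_assoc)
qed

lemma weight_quadratic_pos:
  assumes xi: "0 \<le> xi" and "v \<noteq> 0" and off_support: "\<And>i. xi $ i = 0 \<Longrightarrow> v $ i = 0"
  shows "0 < v \<bullet> (weight xi *v v)"
proof -
  define z where "z = matrix_inv (SgM xi) *v v"
  define w where "w = M0 xi *v z"
  note coords = weight_coordinates[OF xi z_def, folded w_def]
  have "v \<bullet> (weight xi *v v) = s2 * (z \<bullet> w) + (Sg *v w) \<bullet> w"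
    by (subst (1) coords(1)) (simp add: coords(2) inner_add_left)
  moreover have "0 \<le> (Sg *v w) \<bullet> w"
    using Sg_psd by (simp add: psd_def inner_commute)
  moreover have "0 < z \<bullet> w"
  proof -
    have "0 \<le> z \<bullet> w"
      using xi by (simp add: w_def M0_def diag_mat_quadratic_nonneg)
    moreover have "z \<bullet> w \<noteq> 0"
    proof
      assume "z \<bullet> w = 0"
      then have "w = 0"
        using xi by (simp add: w_def M0_def diag_mat_quadratic_eq_0)
      have "v $ i = 0" for i
      proof (cases "xi $ i = 0")
        case False
        then have "z $ i = 0"
          using arg_cong[OF \<open>w = 0\<close>, of "\<lambda>u. u $ i"]
          by (simp add: w_def M0_def diag_mat_vector_mult)
        then show ?thesis
          using coords(1) \<open>w = 0\<close> by (simp add: vec_eq_iff)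
      qed (rule off_support)
      then show False
        using \<open>v \<noteq> 0\<close> by (simp add: vec_eq_iff)
    qed
    ultimately show ?thesis
      by simp
  qed
  ultimately show ?thesis
    using s2_pos by (smt (verit) mult_pos_pos)
qed

lemma invertible_Mbeta_middle: "invertible (s2 *\<^sub>R mat 1 + M0_sqrt xi ** Sg ** M0_sqrt xi)"
  using invertible_scaleR_id_plus_psd[OF s2_pos psd_congruence[OF Sg_psd, of "M0_sqrt xi"]]
  by simp

lemma Mbeta_eq_weight:
  assumes xi: "0 \<le> xi"
  shows "Mbeta s2 Sg A xi = transpose A ** weight xi ** A"
proof -
  define Dh where "Dh = M0_sqrt xi"
  define K where "K = s2 *\<^sub>R mat 1 + Dh ** Sg ** Dh"
  have DhDh: "Dh ** Dh = M0 xi"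
    using M0_sqrt_mult_self[OF xi] by (simp add: Dh_def)
  have "MSg xi ** Dh = Dh ** K"
    by (simp add: MSg_def K_def DhDh[symmetric] matrix_add_rdistrib matrix_add_ldistrib
        matrix_scalar_ac scalar_matrix_assoc[symmetric] matrix_mul_assoc)
  then have "Dh ** matrix_inv K = matrix_inv (MSg xi) ** Dh"
    using matrix_inv_intertwine[OF invertible_MSg[OF xi]] invertible_Mbeta_middle
    by (simp add: K_def Dh_def)
  have "Mbeta s2 Sg A xi = transpose A ** (Dh ** matrix_inv K) ** Dh ** A"
    by (simp add: Mbeta_def Dh_def K_def matrix_mul_assoc)
  also have "\<dots> = transpose A ** (matrix_inv (MSg xi) ** Dh) ** Dh ** A"
    by (simp only: \<open>Dh ** matrix_inv K = matrix_inv (MSg xi) ** Dh\<close>)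
  also have "\<dots> = transpose A ** weight xi ** A"
    by (simp add: weight_def DhDh[symmetric] matrix_mul_assoc)
  finally show ?thesis .
qed

lemma pd_Mbeta:
  fixes A :: "real^'p^'j"
  assumes xi: "0 \<le> xi" and est: "estimable A xi"
  shows "pd (Mbeta s2 Sg A xi)"
  unfolding pd_def Mbeta_eq_weight[OF xi]
proof (intro conjI allI impI)
  show "transpose (transpose A ** weight xi ** A) = transpose A ** weight xi ** A"
    by (simp add: matrix_transpose_mul transpose_weight[OF xi] matrix_mul_assoc)
  fix x :: "real^'p" assume "x \<noteq> 0"
  moreover have "inj ((*v) A)"
    using est by (simp add: estimable_def full_rank_injective)
  ultimately have "A *v x \<noteq> 0"
    by (metis injD matrix_vector_mult_0_right)
  then have "0 < (A *v x) \<bullet> (weight xi *v (A *v x))"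
    using weight_quadratic_pos[OF xi] estimable_vanishes_off_support[OF est] by blast
  then show "0 < x \<bullet> ((transpose A ** weight xi ** A) *v x)"
    by (simp only: inner_matrix_vector_transpose matrix_vector_mul_assoc[symmetric] transpose_transpose)
qed

lemma quadratic_form_MSg_SgM:
  assumes "0 \<le> xi"
  shows "v \<bullet> ((matrix_inv (MSg xi) ** E ** matrix_inv (SgM xi)) *v v)
    = (matrix_inv (SgM xi) *v v) \<bullet> (E *v (matrix_inv (SgM xi) *v v))"
proof -
  have "v \<bullet> ((matrix_inv (MSg xi) ** E ** matrix_inv (SgM xi)) *v v)
      = v \<bullet> (matrix_inv (MSg xi) *v (E *v (matrix_inv (SgM xi) *v v)))"
    by (simp add: matrix_vector_mul_assoc matrix_mul_assoc)
  also have "\<dots> = (transpose (matrix_inv (MSg xi)) *v v) \<bullet> (E *v (matrix_inv (SgM xi) *v v))"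
    by (rule inner_matrix_vector_transpose)
  finally show ?thesis
    by (simp add: transpose_matrix_inv_MSg[OF assms])
qed

text \<open>Tangent inequality for the matrix-concave map \<open>N(\<xi>) = (\<sigma>\<^sup>2 M\<^sub>0(\<xi>)\<^sup>-\<^sup>1 + \<Sigma>)\<^sup>-\<^sup>1\<close>, whose derivative in
  direction \<open>M\<^sub>0(\<xi>') - M\<^sub>0(\<xi>)\<close> gives the right-hand side. In the coordinates \<open>z, z'\<close> below the gap
  is the sum of the nonnegative forms \<open>q1\<close> and \<open>q2\<close>.\<close>
lemma weight_le_tangent:
  assumes xi: "0 \<le> xi" and xi': "0 \<le> xi'"
  shows "v \<bullet> ((weight xi' - weight xi) *v v)
    \<le> s2 * (v \<bullet> ((matrix_inv (MSg xi) ** (M0 xi' - M0 xi) ** matrix_inv (SgM xi)) *v v))"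
proof -
  define z where "z = matrix_inv (SgM xi) *v v"
  define z' where "z' = matrix_inv (SgM xi') *v v"
  define w where "w = M0 xi *v z"
  define w' where "w' = M0 xi' *v z'"
  note coords = weight_coordinates[OF xi z_def, folded w_def]
  note coords' = weight_coordinates[OF xi' z'_def, folded w'_def]
  have lhs: "v \<bullet> ((weight xi' - weight xi) *v v) = v \<bullet> w' - v \<bullet> w"
    by (simp add: matrix_vector_mult_diff_rdistrib inner_diff_right coords(2) coords'(2))
  have rhs: "v \<bullet> ((matrix_inv (MSg xi) ** (M0 xi' - M0 xi) ** matrix_inv (SgM xi)) *v v)
      = z \<bullet> (M0 xi' *v z) - z \<bullet> w"
    by (simp add: quadratic_form_MSg_SgM[OF xi] z_def[symmetric] w_def
        matrix_vector_mult_diff_rdistrib inner_diff_right)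
  have vw': "v \<bullet> w' = s2 * (z \<bullet> w') + w \<bullet> (Sg *v w')"
    by (subst coords(1)) (simp add: inner_add_left symmetric_matrix_inner_swap[OF Sg_symmetric])
  have vw'': "v \<bullet> w' = s2 * (z' \<bullet> w') + w' \<bullet> (Sg *v w')"
    by (subst coords'(1)) (simp add: inner_add_left inner_commute[of "Sg *v w'" w'])
  have vw: "v \<bullet> w = s2 * (z \<bullet> w) + w \<bullet> (Sg *v w)"
    by (subst coords(1)) (simp add: inner_add_left inner_commute[of "Sg *v w" w])
  have "0 \<le> (z - z') \<bullet> (M0 xi' *v (z - z'))"
    using xi' by (simp add: M0_def diag_mat_quadratic_nonneg)
  also have "\<dots> = z \<bullet> (M0 xi' *v z) - 2 * (z \<bullet> w') + z' \<bullet> w'"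
    using quadratic_form_diff[OF transpose_M0[of xi'], of z z'] by (simp only: w'_def)
  finally have "0 \<le> s2 * (z \<bullet> (M0 xi' *v z) - 2 * (z \<bullet> w') + z' \<bullet> w')"
    using s2_pos by simp
  then have q1: "0 \<le> s2 * (z \<bullet> (M0 xi' *v z)) - 2 * (s2 * (z \<bullet> w')) + s2 * (z' \<bullet> w')"
    by (simp add: algebra_simps)
  have "0 \<le> (w - w') \<bullet> (Sg *v (w - w'))"
    using Sg_psd by (simp add: psd_def)
  then have q2: "0 \<le> w \<bullet> (Sg *v w) - 2 * (w \<bullet> (Sg *v w')) + w' \<bullet> (Sg *v w')"
    by (simp only: quadratic_form_diff[OF Sg_symmetric])
  show ?thesis
    unfolding lhs rhs using vw' vw'' vw q1 q2 by (simp add: right_diff_distrib)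
qed

lemma trace_psi:
  "trace (matrix_inv (Mbeta s2 Sg A xi) **
      (transpose A ** (matrix_inv (MSg xi) ** diag_mat e ** matrix_inv (SgM xi)) ** A))
    = (\<Sum>j\<in>UNIV. e $ j * psi s2 Sg A xi j)"
proof -
  let ?Mi = "matrix_inv (Mbeta s2 Sg A xi)"
  have "trace (?Mi ** (transpose A ** (matrix_inv (MSg xi) ** diag_mat e ** matrix_inv (SgM xi)) ** A))
      = trace ((matrix_inv (SgM xi) ** A) ** (?Mi ** transpose A ** matrix_inv (MSg xi) ** diag_mat e))"
    using trace_mul_sym[of "?Mi ** transpose A ** matrix_inv (MSg xi) ** diag_mat e"
        "matrix_inv (SgM xi) ** A"]
    by (simp add: matrix_mul_assoc)
  also have "\<dots> = (\<Sum>j\<in>UNIV. psi s2 Sg A xi j * e $ j)"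
    by (simp add: matrix_mul_assoc trace_mult_diag_mat psi_eq)
  finally show ?thesis
    by (simp add: mult.commute)
qed

text \<open>The right-hand side is the directional derivative of \<open>ln det M\<^sub>\<beta>\<close> at \<open>\<xi>\<close> towards \<open>\<xi>'\<close>.\<close>
lemma ln_det_Mbeta_le:
  assumes xi: "0 \<le> xi" "estimable A xi" and xi': "0 \<le> xi'" "estimable A xi'"
  shows "ln (det (Mbeta s2 Sg A xi')) - ln (det (Mbeta s2 Sg A xi))
    \<le> s2 * (\<Sum>j\<in>UNIV. (xi' $ j - xi $ j) * psi s2 Sg A xi j)"
proof -
  let ?M = "Mbeta s2 Sg A xi" and ?M' = "Mbeta s2 Sg A xi'"
  let ?T = "matrix_inv (MSg xi) ** (M0 xi' - M0 xi) ** matrix_inv (SgM xi)"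
  let ?G = "s2 *\<^sub>R ?T - (weight xi' - weight xi)"
  have "?M' - ?M = transpose A ** (weight xi' - weight xi) ** A"
    by (simp add: Mbeta_eq_weight[OF xi(1)] Mbeta_eq_weight[OF xi'(1)] matrix_diff_ldistrib
        matrix_diff_rdistrib)
  then have "trace (matrix_inv ?M ** (?M' - ?M))
      = s2 * trace (matrix_inv ?M ** (transpose A ** ?T ** A))
        - trace (matrix_inv ?M ** (transpose A ** ?G ** A))"
    by (simp add: matrix_diff_ldistrib matrix_diff_rdistrib matrix_scalar_ac
        scalar_matrix_assoc[symmetric] trace_sub trace_scaleR right_diff_distrib)
  moreover have "0 \<le> trace (matrix_inv ?M ** (transpose A ** ?G ** A))"
  proof (rule trace_psd_mult_nonneg)
    show "psd (matrix_inv ?M)"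
      using pd_imp_psd[OF pd_matrix_inv[OF pd_Mbeta[OF xi]]] .
    fix x
    have "x \<bullet> ((transpose A ** ?G ** A) *v x) = (A *v x) \<bullet> (?G *v (A *v x))"
      by (simp only: matrix_vector_mul_assoc[symmetric] inner_matrix_vector_transpose
          transpose_transpose)
    also have "\<dots> = s2 * ((A *v x) \<bullet> (?T *v (A *v x)))
        - (A *v x) \<bullet> ((weight xi' - weight xi) *v (A *v x))"
      by (simp add: matrix_vector_mult_diff_rdistrib scaleR_matrix_vector_mult inner_diff_right)
    finally show "0 \<le> x \<bullet> ((transpose A ** ?G ** A) *v x)"
      using weight_le_tangent[OF xi(1) xi'(1), of "A *v x"] by simp
  qed
  moreover have "trace (matrix_inv ?M ** (transpose A ** ?T ** A))
      = (\<Sum>j\<in>UNIV. (xi' $ j - xi $ j) * psi s2 Sg A xi j)"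
    using trace_psi[of A xi "xi' - xi"] by (simp add: M0_def diag_mat_diff)
  ultimately show ?thesis
    using ln_det_le_tangent[OF pd_Mbeta[OF xi] pd_Mbeta[OF xi']] s2_pos by simp
qed

lemma tendsto_Mbeta:
  assumes "(f \<longlongrightarrow> xi) F"
  shows "((\<lambda>t. Mbeta s2 Sg A (f t)) \<longlongrightarrow> Mbeta s2 Sg A xi) F"
  unfolding Mbeta_def
  by (intro tendsto_intros tendsto_matrix_inv assms invertible_Mbeta_middle)

lemma tendsto_psi:
  assumes f: "(f \<longlongrightarrow> xi) F" and xi: "0 \<le> xi" "estimable A xi"
  shows "((\<lambda>t. psi s2 Sg A (f t) j) \<longlongrightarrow> psi s2 Sg A xi j) F"
  unfolding psi_eq SgM_def MSg_def
  by (intro tendsto_vec_nth tendsto_intros tendsto_matrix_inv tendsto_Mbeta f)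
    (simp_all add: invertible_SgM[OF xi(1), unfolded SgM_def]
      invertible_MSg[OF xi(1), unfolded MSg_def] pd_invertible pd_Mbeta xi)

lemma D_optimal_imp_directional_nonpos:
  assumes opt: "D_optimal s2 Sg A Itot xs" and y: "is_design Itot y"
  shows "(\<Sum>j\<in>UNIV. (y $ j - xs $ j) * psi s2 Sg A xs j) \<le> 0"
proof -
  have xs: "is_design Itot xs" "estimable A xs"
    using opt by (simp_all add: D_optimal_def)
  define xt :: "real \<Rightarrow> real^'j" where "xt t = xs + t *\<^sub>R (y - xs)" for t
  define g where "g t = (\<Sum>j\<in>UNIV. (y $ j - xs $ j) * psi s2 Sg A (xt t) j)" for t
  \<comment> \<open>Concavity at \<open>xt t\<close> and optimality of \<open>xs\<close> bound the derivative at \<open>xt t\<close>; then \<open>t \<rightarrow> 0\<close>.\<close>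
  have g_nonpos: "g t \<le> 0" if t: "0 < t" "t < 1" for t
  proof -
    have des: "is_design Itot (xt t)"
      unfolding xt_def using is_design_segment[OF xs(1) y] t by simp
    have est: "estimable A (xt t)"
      unfolding xt_def using estimable_design_segment[OF xs y] t by simp
    have "0 \<le> ln (det (Mbeta s2 Sg A xs)) - ln (det (Mbeta s2 Sg A (xt t)))"
      using opt des est by (simp add: D_optimal_def)
    also have "\<dots> \<le> s2 * (\<Sum>j\<in>UNIV. (xs $ j - xt t $ j) * psi s2 Sg A (xt t) j)"
      by (rule ln_det_Mbeta_le[OF is_design_nonneg[OF des] est is_design_nonneg[OF xs(1)] xs(2)])
    also have "(\<Sum>j\<in>UNIV. (xs $ j - xt t $ j) * psi s2 Sg A (xt t) j) = - t * g t"
      unfolding g_def sum_distrib_left by (rule sum.cong) (simp_all add: xt_def algebra_simps)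
    finally have "s2 * t * g t \<le> s2 * t * 0"
      by (simp add: algebra_simps)
    with mult_pos_pos[OF s2_pos t(1)] show ?thesis
      by (rule mult_le_cancel_left_pos[THEN iffD1])
  qed
  have ev: "eventually (\<lambda>t. g t \<le> 0) (at_right 0)"
    by (rule eventually_mono[OF eventually_at_right_real[OF zero_less_one]]) (simp add: g_nonpos)
  have "(xt \<longlongrightarrow> xt 0) (at_right 0)"
    unfolding xt_def by (intro tendsto_intros)
  then have "(xt \<longlongrightarrow> xs) (at_right 0)"
    by (simp add: xt_def)
  then have psi_lim: "((\<lambda>t. psi s2 Sg A (xt t) j) \<longlongrightarrow> psi s2 Sg A xs j) (at_right 0)" for j
    by (rule tendsto_psi[OF _ is_design_nonneg[OF xs(1)] xs(2)])
  have lim: "(g \<longlongrightarrow> (\<Sum>j\<in>UNIV. (y $ j - xs $ j) * psi s2 Sg A xs j)) (at_right 0)"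
    unfolding g_def[abs_def] by (intro tendsto_sum tendsto_mult_left psi_lim)
  show ?thesis
    using lim ev trivial_limit_at_right_real by (rule tendsto_upperbound)
qed

lemma directional_nonpos_imp_D_optimal:
  assumes xs: "is_design Itot xs" "estimable A xs"
    and dir: "\<And>y. is_design Itot y \<Longrightarrow> (\<Sum>j\<in>UNIV. (y $ j - xs $ j) * psi s2 Sg A xs j) \<le> 0"
  shows "D_optimal s2 Sg A Itot xs"
  unfolding D_optimal_def
proof (intro conjI allI impI xs)
  fix xi assume "is_design Itot xi \<and> estimable A xi"
  then have xi: "is_design Itot xi" "estimable A xi"
    by simp_all
  have "ln (det (Mbeta s2 Sg A xi)) - ln (det (Mbeta s2 Sg A xs))
      \<le> s2 * (\<Sum>j\<in>UNIV. (xi $ j - xs $ j) * psi s2 Sg A xs j)"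
    by (rule ln_det_Mbeta_le[OF is_design_nonneg[OF xs(1)] xs(2) is_design_nonneg[OF xi(1)] xi(2)])
  also have "\<dots> \<le> 0"
    using mult_nonneg_nonpos[OF less_imp_le[OF s2_pos] dir[OF xi(1)]] .
  finally show "ln (det (Mbeta s2 Sg A xi)) \<le> ln (det (Mbeta s2 Sg A xs))"
    by simp
qed

end

theorem theorem1:
  fixes s2 Itot :: real
    and Sg :: "real^'j::finite^'j"
    and A :: "real^'p::finite^'j"
    and xs :: "real^'j"
  assumes Jp: "CARD('p) \<le> CARD('j)"
    and s2: "s2 > 0"
    and Sg_sym: "transpose Sg = Sg"
    and Sg_nnd: "\<forall>x. 0 \<le> x \<bullet> (Sg *v x)"
    and Itot: "Itot > 0"
    and des: "is_design Itot xs"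
    and est: "estimable A xs"
  shows "(D_optimal s2 Sg A Itot xs \<longleftrightarrow>
            (\<forall>j. psi s2 Sg A xs j \<le> (1 / Itot) * (\<Sum>l\<in>UNIV. xs $ l * psi s2 Sg A xs l)))
       \<and> (D_optimal s2 Sg A Itot xs \<longrightarrow>
            (\<forall>j. xs $ j > 0 \<longrightarrow>
               psi s2 Sg A xs j = (1 / Itot) * (\<Sum>l\<in>UNIV. xs $ l * psi s2 Sg A xs l)))"
proof -
  interpret random_effects_model s2 Sg
    using s2 Sg_sym Sg_nnd by unfold_locales (simp_all add: psd_def)
  have "D_optimal s2 Sg A Itot xs
      \<longleftrightarrow> (\<forall>y. is_design Itot y \<longrightarrow> (\<Sum>j\<in>UNIV. (y $ j - xs $ j) * psi s2 Sg A xs j) \<le> 0)"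
    using D_optimal_imp_directional_nonpos directional_nonpos_imp_D_optimal[OF des est] by blast
  also have "\<dots> \<longleftrightarrow> (\<forall>j. psi s2 Sg A xs j \<le> (1 / Itot) * (\<Sum>l\<in>UNIV. xs $ l * psi s2 Sg A xs l))"
    by (rule design_directional_nonpos_iff[OF Itot des])
  finally show ?thesis
    using design_average_attained_on_support[OF Itot des] by blast
qed

end
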